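(* Let $G$ be an outerplanar graph with $n \geq 3$ vertices. Then every secure total dominating set of $G$ has at least $\lceil (n+2)/3 \rceil$ vertices; that is, \[ \gamma_{st}(G) \geq \left\lceil \frac{n+2}{3} \right\rceil . \]
   Context: All graphs are finite, simple and undirected. A graph is outerplanar if it has a crossing-free embedding in the plane in which every vertex lies on the boundary of the outer (unbounded) face. A set $S \subseteq V(G)$ is a total dominating set of $G$ if every vertex of $G$ (including the vertices of $S$) is adjacent to some vertex of $S$. A total dominating set $S$ is a secure total dominating set if for every vertex $u \in V(G)\setminus S$ there is a vertex $v \in S$ with $uv \in E(G)$ such that $(S \setminus \{v\}) \cup \{u\}$ is also a total dominating set of $G$. The secure total domination number $\gamma_{st}(G)$ is the minimum cardinality of a secure total dominating set of $G$. *)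

theory Defs
  imports "HOL-Analysis.Analysis"
begin

definition simple_graph :: "'a set \<Rightarrow> 'a set set \<Rightarrow> bool" where
  "simple_graph V E \<longleftrightarrow> finite V \<and>
     (\<forall>e\<in>E. \<exists>u v. u \<in> V \<and> v \<in> V \<and> u \<noteq> v \<and> e = {u, v})"

definition adj :: "'a set set \<Rightarrow> 'a \<Rightarrow> 'a \<Rightarrow> bool" where
  "adj E u v \<longleftrightarrow> {u, v} \<in> E"

text \<open>Outerplanar: every vertex lies on the boundary of the outer (unbounded) face,
  i.e. the frontier of the unbounded part of the complement of the drawing.\<close>
definition outerplanar :: "'a set \<Rightarrow> 'a set set \<Rightarrow> bool" where
  "outerplanar V E \<longleftrightarrow> simple_graph V E \<and>
     (\<exists>(p :: 'a \<Rightarrow> complex) (\<gamma> :: 'a set \<Rightarrow> real \<Rightarrow> complex).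
        inj_on p V \<and>
        (\<forall>e\<in>E. arc (\<gamma> e) \<and> {pathstart (\<gamma> e), pathfinish (\<gamma> e)} = p ` e) \<and>
        (\<forall>e\<in>E. \<forall>v\<in>V. p v \<in> path_image (\<gamma> e) \<longrightarrow> v \<in> e) \<and>
        (\<forall>e1\<in>E. \<forall>e2\<in>E. e1 \<noteq> e2 \<longrightarrow>
            path_image (\<gamma> e1) \<inter> path_image (\<gamma> e2) \<subseteq> p ` (e1 \<inter> e2)) \<and>
        (let D = p ` V \<union> (\<Union>e\<in>E. path_image (\<gamma> e))
         in \<forall>v\<in>V. p v \<in> frontier (outside D)))"

definition total_dominating :: "'a set \<Rightarrow> 'a set set \<Rightarrow> 'a set \<Rightarrow> bool" where
  "total_dominating V E S \<longleftrightarrow> S \<subseteq> V \<and> (\<forall>x\<in>V. \<exists>s\<in>S. adj E x s)"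

definition secure_total_dominating :: "'a set \<Rightarrow> 'a set set \<Rightarrow> 'a set \<Rightarrow> bool" where
  "secure_total_dominating V E S \<longleftrightarrow> total_dominating V E S \<and>
     (\<forall>u\<in>V - S. \<exists>v\<in>S. adj E u v \<and> total_dominating V E ((S - {v}) \<union> {u}))"

end

theory Submission
  imports Defs
begin

text \<open>Every vertex \<open>u\<close> outside a secure total dominating set \<open>S\<close> has two distinct
  neighbours in \<open>S\<close>: the vertex \<open>v\<close> it replaces, and the vertex that dominates \<open>u\<close> after
  the swap. Since all vertices of an outerplanar graph lie on the outer face, the Jordan curve
  theorem rules out subdivisions of \<open>K\<^sub>2\<^sub>,\<^sub>3\<close>. For such a graph, if every vertex of
  \<open>Y = V - S\<close> is attached to two vertices of \<open>S\<close>, then \<open>|Y| \<le> 2|S| - 2\<close>: the first vertex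
  of a longest path alternating between \<open>S\<close> and \<open>Y\<close> has at most two attached vertices in
  \<open>Y\<close>, since two attached vertices off the path would close three internally disjoint
  paths; deleting it together with its attached vertices gives an induction on \<open>|S|\<close>.
  Hence \<open>n = |S| + |Y| \<le> 3|S| - 2\<close>.\<close>

lemma Jordan_two_arcs:
  fixes c1 c2 :: "real \<Rightarrow> complex"
  assumes "arc c1" "arc c2" "pathstart c1 = a" "pathstart c2 = a"
    "pathfinish c1 = b" "pathfinish c2 = b"
    "path_image c1 \<inter> path_image c2 = {a, b}"
  shows "inside (path_image c1 \<union> path_image c2) \<noteq> {}"
    "connected (inside (path_image c1 \<union> path_image c2))"
    "frontier (inside (path_image c1 \<union> path_image c2)) = path_image c1 \<union> path_image c2"
proof -
  have "simple_path (c1 +++ reversepath c2)"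
    using assms by (simp add: simple_path_join_loop_eq arc_reversepath)
  moreover have "path_image (c1 +++ reversepath c2) = path_image c1 \<union> path_image c2"
    using assms by (simp add: path_image_join)
  ultimately show "inside (path_image c1 \<union> path_image c2) \<noteq> {}"
    "connected (inside (path_image c1 \<union> path_image c2))"
    "frontier (inside (path_image c1 \<union> path_image c2)) = path_image c1 \<union> path_image c2"
    using Jordan_inside_outside[of "c1 +++ reversepath c2"] assms by auto
qed

lemma connected_subset_outside:
  fixes B C :: "'a::real_normed_vector set"
  assumes "closed B" "connected C" "C \<inter> B = {}" "x \<in> closure C" "x \<in> outside B"
  shows "C \<subseteq> outside B"
proof -
  have "outside B \<inter> C \<noteq> {}"
    using assms(4,5) open_outside[OF assms(1)] open_Int_closure_eq_empty by blast
  then have "inside B \<inter> C = {}"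
    using inside_outside_intersect_connected[OF assms(2)] assms(3) by blast
  then show ?thesis
    using assms(3) inside_Un_outside[of B] by blast
qed

lemma outside_Un_of_connected_Int:
  fixes S T :: "complex set"
  assumes "compact S" "compact T" "connected (S \<inter> T)" "x \<in> outside S" "x \<in> outside T"
  shows "x \<in> outside (S \<union> T)"
proof -
  have bounded: "bounded S" "bounded T" "bounded (S \<union> T)"
    using assms(1,2) by (simp_all add: compact_imp_bounded)
  obtain y where y: "y \<in> outside (S \<union> T)"
    using unbounded_outside[OF bounded(3)] by fastforce
  have "connected_component (- S) x y"
  proof -
    have "y \<in> outside S" using y outside_mono[of S "S \<union> T"] by blast
    moreover have "connected (outside S)" by (simp add: connected_outside bounded)
    ultimately show ?thesis
      using assms(4) outside_no_overlap[of S] unfolding connected_component_def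
      by (intro exI[of _ "outside S"]) blast
  qed
  moreover have "connected_component (- T) x y"
  proof -
    have "y \<in> outside T" using y outside_mono[of T "S \<union> T"] by blast
    moreover have "connected (outside T)" by (simp add: connected_outside bounded)
    ultimately show ?thesis
      using assms(5) outside_no_overlap[of T] unfolding connected_component_def
      by (intro exI[of _ "outside T"]) blast
  qed
  ultimately have "connected_component (- (S \<union> T)) y x"
    using Janiszewski[OF assms(1) compact_imp_closed[OF assms(2)] assms(3)]
    by (simp add: connected_component_sym)
  then show ?thesis using y outside_same_component by blast
qed

text \<open>If no \<open>q\<^sub>i\<close> were inside, the inside of \<open>c\<^sub>1 \<union> c\<^sub>2\<close> would lie outside both other
  Jordan curves, hence, by Janiszewski's theorem, outside their union, which contains
  \<open>c\<^sub>1 \<union> c\<^sub>2\<close>.\<close>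
lemma theta_arcs_inside:
  fixes c1 c2 c3 :: "real \<Rightarrow> complex"
  assumes arcs: "arc c1" "arc c2" "arc c3"
    and starts: "pathstart c1 = a" "pathstart c2 = a" "pathstart c3 = a"
    and finishes: "pathfinish c1 = b" "pathfinish c2 = b" "pathfinish c3 = b"
    and Int12: "path_image c1 \<inter> path_image c2 = {a, b}"
    and Int13: "path_image c1 \<inter> path_image c3 = {a, b}"
    and Int23: "path_image c2 \<inter> path_image c3 = {a, b}"
    and q: "q1 \<in> path_image c1 - {a, b}" "q2 \<in> path_image c2 - {a, b}" "q3 \<in> path_image c3 - {a, b}"
  shows "q1 \<in> inside (path_image c2 \<union> path_image c3) \<or>
         q2 \<in> inside (path_image c1 \<union> path_image c3) \<or>
         q3 \<in> inside (path_image c1 \<union> path_image c2)"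
proof (rule ccontr)
  assume not_inside: "\<not> ?thesis"
  define J12 where "J12 = path_image c1 \<union> path_image c2"
  define J13 where "J13 = path_image c1 \<union> path_image c3"
  define J23 where "J23 = path_image c2 \<union> path_image c3"
  have compact: "compact J12" "compact J13" "compact J23"
    using arcs unfolding J12_def J13_def J23_def by (simp_all add: compact_Un compact_arc_image)
  have q_outside: "q1 \<in> outside J23" "q2 \<in> outside J13" "q3 \<in> outside J12"
    using not_inside q Int12 Int13 Int23 inside_Un_outside
    unfolding J12_def J13_def J23_def by blast+
  have "path_image c3 - {a, b} \<subseteq> outside J12"
  proof (rule connected_subset_outside)
    show "connected (path_image c3 - {a, b})"
      using connected_simple_path_endless[of c3] arcs starts finishes arc_imp_simple_path by auto
  qed (use compact q q_outside Int13 Int23 closure_subset[of "path_image c3 - {a, b}"]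
      in \<open>auto simp: J12_def compact_imp_closed\<close>)
  moreover have "a \<in> J12" "b \<in> J12" using Int12 unfolding J12_def by auto
  ultimately have "inside J12 \<inter> path_image c3 = {}"
    using inside_no_overlap[of J12] inside_Int_outside[of J12] by blast
  then have disjoint: "inside J12 \<inter> J13 = {}" "inside J12 \<inter> J23 = {}"
    using inside_no_overlap[of J12] unfolding J12_def J13_def J23_def by blast+
  note Jordan12 = Jordan_two_arcs[OF arcs(1,2) starts(1,2) finishes(1,2) Int12, folded J12_def]
  have closure12: "q1 \<in> closure (inside J12)" "q2 \<in> closure (inside J12)"
    using Jordan12(3) q unfolding frontier_def J12_def by blast+
  obtain x where x: "x \<in> inside J12" using Jordan12(1) by blast
  have "x \<in> outside J13"
    using connected_subset_outside[OF compact_imp_closed[OF compact(2)] Jordan12(2)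
        disjoint(1) closure12(2) q_outside(2)] x by blast
  moreover have "x \<in> outside J23"
    using connected_subset_outside[OF compact_imp_closed[OF compact(3)] Jordan12(2)
        disjoint(2) closure12(1) q_outside(1)] x by blast
  moreover have "connected (J13 \<inter> J23)"
  proof -
    have "a \<in> path_image c3" "b \<in> path_image c3"
      using starts(3) finishes(3) pathstart_in_path_image pathfinish_in_path_image by blast+
    then have "J13 \<inter> J23 = path_image c3" using Int12 unfolding J13_def J23_def by auto
    then show ?thesis using arcs(3) by (simp add: arc_imp_path connected_path_image)
  qed
  ultimately have "x \<in> outside (J13 \<union> J23)"
    using outside_Un_of_connected_Int compact by blast
  moreover have "outside (J13 \<union> J23) \<subseteq> outside J12"
    by (rule outside_mono) (auto simp: J12_def J13_def J23_def)
  ultimately show False using x inside_Int_outside[of J12] by blast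
qed

fun path_edges :: "'a list \<Rightarrow> 'a set set" where
  "path_edges (x # y # zs) = insert {x, y} (path_edges (y # zs))"
| "path_edges _ = {}"

lemma path_edges_subset_set: "e \<in> path_edges xs \<Longrightarrow> e \<subseteq> set xs"
  by (induction xs rule: path_edges.induct) auto

lemma path_edges_conv_nth: "path_edges xs = {{xs ! i, xs ! Suc i} | i. Suc i < length xs}"
proof (induction xs rule: path_edges.induct)
  case (1 x y zs)
  have "{{(x # y # zs) ! i, (x # y # zs) ! Suc i} | i. Suc i < length (x # y # zs)} =
        insert {x, y} {{(y # zs) ! i, (y # zs) ! Suc i} | i. Suc i < length (y # zs)}"
    (is "?lhs = ?rhs")
  proof
    show "?lhs \<subseteq> ?rhs"
    proof
      fix e assume "e \<in> ?lhs"
      then obtain i where i: "e = {(x # y # zs) ! i, (x # y # zs) ! Suc i}"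
        "Suc i < length (x # y # zs)"
        by blast
      show "e \<in> ?rhs"
      proof (cases i)
        case 0 then show ?thesis using i by simp
      next
        case (Suc j) then show ?thesis using i by auto
      qed
    qed
    show "?rhs \<subseteq> ?lhs"
    proof
      fix e assume "e \<in> ?rhs"
      then consider "e = {x, y}" | i where "e = {(y # zs) ! i, (y # zs) ! Suc i}" "Suc i < length (y # zs)"
        by blast
      then show "e \<in> ?lhs"
      proof cases
        case 1 then show ?thesis by (intro CollectI exI[of _ 0]) simp
      next
        case (2 i) then show ?thesis by (intro CollectI exI[of _ "Suc i"]) simp
      qed
    qed
  qed
  then show ?case using "1.IH" by simp
qed auto

lemma path_edges_rev [simp]: "path_edges (rev xs) = path_edges xs"
proof -
  have sub: "path_edges (rev ys) \<subseteq> path_edges ys" for ys :: "'a list"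
  proof
    fix e assume "e \<in> path_edges (rev ys)"
    then obtain i where i: "e = {rev ys ! i, rev ys ! Suc i}" "Suc i < length ys"
      unfolding path_edges_conv_nth by auto
    let ?m = "length ys - Suc (Suc i)"
    have "rev ys ! i = ys ! Suc ?m" "rev ys ! Suc i = ys ! ?m"
      using i(2) by (auto simp: rev_nth Suc_diff_Suc)
    then have "e = {ys ! ?m, ys ! Suc ?m}" using i(1) by (simp add: insert_commute)
    moreover have "Suc ?m < length ys" using i(2) by simp
    ultimately show "e \<in> path_edges ys" unfolding path_edges_conv_nth by blast
  qed
  show ?thesis using sub[of xs] sub[of "rev xs"] by simp
qed

lemma path_edges_segment:
  assumes "k < length xs"
  shows "path_edges (map (nth xs) [i..<Suc k]) \<subseteq> path_edges xs"
proof
  fix e assume "e \<in> path_edges (map (nth xs) [i..<Suc k])"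
  then obtain j where "e = {map (nth xs) [i..<Suc k] ! j, map (nth xs) [i..<Suc k] ! Suc j}"
    "Suc j < length (map (nth xs) [i..<Suc k])"
    unfolding path_edges_conv_nth by blast
  then have "e = {xs ! (i + j), xs ! Suc (i + j)}" "Suc (i + j) < length xs"
    using assms by (simp_all only: length_map length_upt nth_map nth_upt; simp)+
  then show "e \<in> path_edges xs" unfolding path_edges_conv_nth by (auto intro!: exI[of _ "i + j"])
qed

lemma path_edges_ends_notin:
  assumes "distinct xs" "3 \<le> length xs"
  shows "{hd xs, last xs} \<notin> path_edges xs"
proof
  assume "{hd xs, last xs} \<in> path_edges xs"
  then obtain i where i: "{hd xs, last xs} = {xs ! i, xs ! Suc i}" "Suc i < length xs"
    unfolding path_edges_conv_nth by blast
  have "xs \<noteq> []" using assms(2) by auto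
  then have image: "nth xs ` {0, length xs - 1} = nth xs ` {i, Suc i}"
    using i(1) by (simp add: hd_conv_nth last_conv_nth)
  have inj: "inj_on (nth xs) {..<length xs}" using inj_on_nth[OF assms(1)] by blast
  have indices: "{0, length xs - 1} \<subseteq> {..<length xs}" "{i, Suc i} \<subseteq> {..<length xs}"
    using i(2) \<open>xs \<noteq> []\<close> by auto
  have "{0, length xs - 1} = {i, Suc i}"
    using image unfolding inj_on_image_eq_iff[OF inj indices] .
  then show False using assms(2) by (auto simp: doubleton_eq_iff)
qed

definition long_path :: "'a set \<Rightarrow> 'a set set \<Rightarrow> 'a \<Rightarrow> 'a \<Rightarrow> 'a list \<Rightarrow> bool" where
  "long_path V E a b P \<longleftrightarrow> distinct P \<and> hd P = a \<and> last P = b \<and> 3 \<le> length P \<and>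
     set P \<subseteq> V \<and> path_edges P \<subseteq> E"

text \<open>Three internally disjoint paths between two vertices, each with an inner vertex, are
  exactly a subdivision of \<open>K\<^sub>2\<^sub>,\<^sub>3\<close>.\<close>
definition K23_subdivision_free :: "'a set \<Rightarrow> 'a set set \<Rightarrow> bool" where
  "K23_subdivision_free V E \<longleftrightarrow> \<not> (\<exists>a b P1 P2 P3.
     long_path V E a b P1 \<and> long_path V E a b P2 \<and> long_path V E a b P3 \<and>
     set P1 \<inter> set P2 = {a, b} \<and> set P1 \<inter> set P3 = {a, b} \<and> set P2 \<inter> set P3 = {a, b})"

locale outerplanar_drawing =
  fixes V :: "'a set" and E :: "'a set set"
    and p :: "'a \<Rightarrow> complex" and \<gamma> :: "'a set \<Rightarrow> real \<Rightarrow> complex"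
  assumes simple: "simple_graph V E"
    and inj_p: "inj_on p V"
    and edge_arc: "e \<in> E \<Longrightarrow> arc (\<gamma> e) \<and> {pathstart (\<gamma> e), pathfinish (\<gamma> e)} = p ` e"
    and edges_meet_at_ends: "e \<in> E \<Longrightarrow> e' \<in> E \<Longrightarrow> e \<noteq> e' \<Longrightarrow>
      path_image (\<gamma> e) \<inter> path_image (\<gamma> e') \<subseteq> p ` (e \<inter> e')"
    and on_outer_face: "v \<in> V \<Longrightarrow> p v \<in> frontier (outside (p ` V \<union> (\<Union>e\<in>E. path_image (\<gamma> e))))"

lemma outerplanar_drawing_exists:
  assumes "outerplanar V E"
  shows "\<exists>p \<gamma>. outerplanar_drawing V E p \<gamma>"
proof -
  obtain p :: "'a \<Rightarrow> complex" and \<gamma> :: "'a set \<Rightarrow> real \<Rightarrow> complex" where "inj_on p V"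
    and "\<forall>e\<in>E. arc (\<gamma> e) \<and> {pathstart (\<gamma> e), pathfinish (\<gamma> e)} = p ` e"
    and "\<forall>e\<in>E. \<forall>v\<in>V. p v \<in> path_image (\<gamma> e) \<longrightarrow> v \<in> e"
    and "\<forall>e1\<in>E. \<forall>e2\<in>E. e1 \<noteq> e2 \<longrightarrow>
      path_image (\<gamma> e1) \<inter> path_image (\<gamma> e2) \<subseteq> p ` (e1 \<inter> e2)"
    and "\<forall>v\<in>V. p v \<in> frontier (outside (p ` V \<union> (\<Union>e\<in>E. path_image (\<gamma> e))))"
    using assms unfolding outerplanar_def Let_def by (elim conjE exE) (rule that; assumption)
  moreover have "simple_graph V E" using assms unfolding outerplanar_def by (rule conjunct1)
  ultimately have "outerplanar_drawing V E p \<gamma>" by unfold_locales simp_all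
  then show ?thesis by blast
qed

context outerplanar_drawing
begin

definition drawing :: "'a list \<Rightarrow> complex set" where
  "drawing P = (\<Union>e\<in>path_edges P. path_image (\<gamma> e))"

lemma vertex_on_edge_arc:
  assumes "e \<in> E" "w \<in> e"
  shows "p w \<in> path_image (\<gamma> e)"
proof -
  have "p w \<in> {pathstart (\<gamma> e), pathfinish (\<gamma> e)}" using edge_arc[OF assms(1)] assms(2) by blast
  then show ?thesis using pathstart_in_path_image[of "\<gamma> e"] pathfinish_in_path_image[of "\<gamma> e"] by auto
qed

lemma edge_arc_oriented:
  assumes "{x, y} \<in> E" "x \<in> V" "y \<in> V" "x \<noteq> y"
  obtains g where "arc g" "pathstart g = p x" "pathfinish g = p y"
    "path_image g = path_image (\<gamma> {x, y})"
proof -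
  have arc: "arc (\<gamma> {x, y})" and ends: "{pathstart (\<gamma> {x, y}), pathfinish (\<gamma> {x, y})} = {p x, p y}"
    using edge_arc[OF assms(1)] by auto
  have "p x \<noteq> p y" using inj_p assms(2-4) by (meson inj_onD)
  then consider "pathstart (\<gamma> {x, y}) = p x" "pathfinish (\<gamma> {x, y}) = p y"
    | "pathstart (\<gamma> {x, y}) = p y" "pathfinish (\<gamma> {x, y}) = p x"
    using ends by (auto simp: doubleton_eq_iff)
  then show ?thesis
  proof cases
    case 1 then show ?thesis using that arc by blast
  next
    case 2 then show ?thesis
      using that[of "reversepath (\<gamma> {x, y})"] arc by (simp add: arc_reversepath)
  qed
qed

lemma path_arc:
  assumes "distinct xs" "2 \<le> length xs" "set xs \<subseteq> V" "path_edges xs \<subseteq> E"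
  shows "\<exists>c. arc c \<and> pathstart c = p (hd xs) \<and> pathfinish c = p (last xs) \<and>
    path_image c = drawing xs"
  using assms
proof (induction xs rule: path_edges.induct)
  case (1 x y zs)
  have x: "x \<in> V" "x \<noteq> y" "x \<notin> set (y # zs)" and y: "y \<in> V" and xy: "{x, y} \<in> E"
    using "1.prems" by auto
  obtain g where g: "arc g" "pathstart g = p x" "pathfinish g = p y"
    "path_image g = path_image (\<gamma> {x, y})"
    using edge_arc_oriented[OF xy x(1) y x(2)] by blast
  show ?case
  proof (cases zs)
    case Nil
    then show ?thesis using g by (auto simp: drawing_def)
  next
    case (Cons w ws)
    then obtain c where c: "arc c" "pathstart c = p y" "pathfinish c = p (last (y # zs))"
      "path_image c = drawing (y # zs)"
      using "1.IH" "1.prems" by auto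
    have "path_image g \<inter> path_image c \<subseteq> {pathstart c}"
    proof
      fix z assume z: "z \<in> path_image g \<inter> path_image c"
      then obtain e where e: "e \<in> path_edges (y # zs)" "z \<in> path_image (\<gamma> e)"
        using c(4) by (auto simp: drawing_def)
      have "e \<subseteq> set (y # zs)" by (rule path_edges_subset_set[OF e(1)])
      then have "{x, y} \<inter> e \<subseteq> {y}" "{x, y} \<noteq> e" using x(3) by auto
      moreover have "e \<in> E" using e(1) "1.prems"(4) by auto
      moreover have "z \<in> path_image (\<gamma> {x, y}) \<inter> path_image (\<gamma> e)" using z g(4) e(2) by blast
      ultimately have "z \<in> p ` {y}" using edges_meet_at_ends[OF xy] by blast
      then show "z \<in> {pathstart c}" using c(2) by simp
    qed
    then have "arc (g +++ c)" using arc_join[OF g(1) c(1)] g(3) c(2) by simp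
    moreover have "drawing (x # y # zs) = path_image g \<union> path_image c"
      using g(4) c(4) by (simp add: drawing_def)
    ultimately show ?thesis
      using g c by (intro exI[of _ "g +++ c"]) (simp add: path_image_join)
  qed
qed auto

lemma long_path_arc:
  assumes "long_path V E a b P"
  obtains c where "arc c" "pathstart c = p a" "pathfinish c = p b" "path_image c = drawing P"
    "p (P ! 1) \<in> path_image c - {p a, p b}" "P ! 1 \<in> V"
proof -
  have P: "distinct P" "hd P = a" "last P = b" "3 \<le> length P" "set P \<subseteq> V" "path_edges P \<subseteq> E"
    using assms unfolding long_path_def by auto
  obtain c where c: "arc c" "pathstart c = p a" "pathfinish c = p b" "path_image c = drawing P"
    using path_arc[of P] P by auto
  have first_edge: "{P ! 0, P ! 1} \<in> path_edges P"
    unfolding path_edges_conv_nth by (intro CollectI exI[of _ 0]) (use P(4) in simp)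
  have "p (P ! 1) \<in> path_image (\<gamma> {P ! 0, P ! 1})"
    by (rule vertex_on_edge_arc) (use first_edge P(6) in auto)
  then have "p (P ! 1) \<in> path_image c"
    using first_edge c(4) by (auto simp: drawing_def)
  moreover have inner: "P ! 1 \<in> V" "P ! 1 \<noteq> a" "P ! 1 \<noteq> b" "a \<in> V" "b \<in> V"
  proof -
    have "P \<noteq> []" using P(4) by auto
    then show "a \<in> V" "b \<in> V" using P(2,3,5) hd_in_set last_in_set by blast+
    have "a = P ! 0" "b = P ! (length P - 1)"
      using \<open>P \<noteq> []\<close> P(2,3) by (simp_all add: hd_conv_nth last_conv_nth)
    moreover have "P ! 1 \<noteq> P ! 0" "P ! 1 \<noteq> P ! (length P - 1)"
      using P(1,4) \<open>P \<noteq> []\<close> by (simp_all add: nth_eq_iff_index_eq)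
    ultimately show "P ! 1 \<noteq> a" "P ! 1 \<noteq> b" by simp_all
    show "P ! 1 \<in> V" using P(4,5) nth_mem[of 1 P] by auto
  qed
  moreover have "p (P ! 1) \<noteq> p a" "p (P ! 1) \<noteq> p b"
    using inner inj_p by (meson inj_onD)+
  ultimately have "p (P ! 1) \<in> path_image c - {p a, p b}" by blast
  from c this inner(1) show ?thesis by (rule that)
qed

lemma long_path_drawings_Int:
  assumes P: "long_path V E a b P" and Q: "long_path V E a b Q" and PQ: "set P \<inter> set Q = {a, b}"
  shows "drawing P \<inter> drawing Q \<subseteq> {p a, p b}"
proof
  fix z assume "z \<in> drawing P \<inter> drawing Q"
  then obtain e e' where e: "e \<in> path_edges P" "e' \<in> path_edges Q"
    "z \<in> path_image (\<gamma> e)" "z \<in> path_image (\<gamma> e')"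
    by (auto simp: drawing_def)
  have "e \<in> E" "e' \<in> E" using e(1,2) P Q by (auto simp: long_path_def)
  have ee': "e \<inter> e' \<subseteq> {a, b}"
    using path_edges_subset_set[OF e(1)] path_edges_subset_set[OF e(2)] PQ by blast
  have "e \<noteq> e'"
  proof
    assume "e = e'"
    obtain u v where "u \<noteq> v" "e = {u, v}"
      using simple \<open>e \<in> E\<close> unfolding simple_graph_def by blast
    moreover have "e \<subseteq> {a, b}" using ee' \<open>e = e'\<close> by simp
    ultimately have "e = {a, b}" by auto
    moreover have "distinct P" "3 \<le> length P" "a = hd P" "b = last P"
      using P unfolding long_path_def by auto
    ultimately show False using e(1) path_edges_ends_notin[of P] by simp
  qed
  then have "z \<in> p ` (e \<inter> e')"
    using edges_meet_at_ends[OF \<open>e \<in> E\<close> \<open>e' \<in> E\<close>] e(3,4) by blast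
  also have "\<dots> \<subseteq> {p a, p b}" using ee' by auto
  finally show "z \<in> {p a, p b}" .
qed

lemma vertex_not_inside_drawing:
  assumes "v \<in> V" "closed J" "J \<subseteq> p ` V \<union> (\<Union>e\<in>E. path_image (\<gamma> e))"
  shows "p v \<notin> inside J"
proof -
  have "p v \<in> closure (outside (p ` V \<union> (\<Union>e\<in>E. path_image (\<gamma> e))))"
    using on_outer_face[OF assms(1)] by (simp add: frontier_def)
  also have "\<dots> \<subseteq> closure (outside J)" by (intro closure_mono outside_mono assms(3))
  finally show ?thesis
    using open_Int_closure_eq_empty[OF open_inside[OF assms(2)], of "outside J"]
      inside_Int_outside[of J] by blast
qed

lemma K23_subdivision_free: "K23_subdivision_free V E"
  unfolding K23_subdivision_free_def
proof (intro notI, elim exE conjE)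
  fix a b P1 P2 P3
  assume paths: "long_path V E a b P1" "long_path V E a b P2" "long_path V E a b P3"
    and Int: "set P1 \<inter> set P2 = {a, b}" "set P1 \<inter> set P3 = {a, b}" "set P2 \<inter> set P3 = {a, b}"
  obtain c1 where c1: "arc c1" "pathstart c1 = p a" "pathfinish c1 = p b" "path_image c1 = drawing P1"
    "p (P1 ! 1) \<in> path_image c1 - {p a, p b}" "P1 ! 1 \<in> V"
    using long_path_arc[OF paths(1)] .
  obtain c2 where c2: "arc c2" "pathstart c2 = p a" "pathfinish c2 = p b" "path_image c2 = drawing P2"
    "p (P2 ! 1) \<in> path_image c2 - {p a, p b}" "P2 ! 1 \<in> V"
    using long_path_arc[OF paths(2)] .
  obtain c3 where c3: "arc c3" "pathstart c3 = p a" "pathfinish c3 = p b" "path_image c3 = drawing P3"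
    "p (P3 ! 1) \<in> path_image c3 - {p a, p b}" "P3 ! 1 \<in> V"
    using long_path_arc[OF paths(3)] .
  have ends: "p a \<in> path_image c" "p b \<in> path_image c"
    if "pathstart c = p a" "pathfinish c = p b" for c
    using that pathstart_in_path_image[of c] pathfinish_in_path_image[of c] by auto
  have Int12: "path_image c1 \<inter> path_image c2 = {p a, p b}"
    using long_path_drawings_Int[OF paths(1,2) Int(1)] ends[OF c1(2,3)] ends[OF c2(2,3)]
    unfolding c1(4) c2(4) by blast
  have Int13: "path_image c1 \<inter> path_image c3 = {p a, p b}"
    using long_path_drawings_Int[OF paths(1,3) Int(2)] ends[OF c1(2,3)] ends[OF c3(2,3)]
    unfolding c1(4) c3(4) by blast
  have Int23: "path_image c2 \<inter> path_image c3 = {p a, p b}"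
    using long_path_drawings_Int[OF paths(2,3) Int(3)] ends[OF c2(2,3)] ends[OF c3(2,3)]
    unfolding c2(4) c3(4) by blast
  have no_vertex_inside: "p v \<notin> inside (path_image c \<union> path_image c')"
    if "v \<in> V" "arc c" "arc c'" "path_image c = drawing P" "path_image c' = drawing Q"
      "long_path V E a b P" "long_path V E a b Q" for v c c' P Q
  proof (rule vertex_not_inside_drawing[OF that(1)])
    show "closed (path_image c \<union> path_image c')"
      by (intro closed_Un compact_imp_closed compact_arc_image that(2,3))
    have "path_edges P \<subseteq> E" "path_edges Q \<subseteq> E"
      using that(6,7) unfolding long_path_def by blast+
    then show "path_image c \<union> path_image c' \<subseteq> p ` V \<union> (\<Union>e\<in>E. path_image (\<gamma> e))"
      unfolding that(4,5) drawing_def by blast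
  qed
  from theta_arcs_inside[OF c1(1) c2(1) c3(1) c1(2) c2(2) c3(2) c1(3) c2(3) c3(3) Int12 Int13 Int23
      c1(5) c2(5) c3(5)]
  show False
    using no_vertex_inside[OF c1(6) c2(1) c3(1) c2(4) c3(4) paths(2,3)]
      no_vertex_inside[OF c2(6) c1(1) c3(1) c1(4) c3(4) paths(1,3)]
      no_vertex_inside[OF c3(6) c1(1) c2(1) c1(4) c2(4) paths(1,2)]
    by blast
qed

end

lemma outerplanar_imp_K23_subdivision_free:
  assumes "outerplanar V E"
  shows "K23_subdivision_free V E"
proof -
  obtain p \<gamma> where "outerplanar_drawing V E p \<gamma>" using outerplanar_drawing_exists[OF assms] by blast
  then show ?thesis by (rule outerplanar_drawing.K23_subdivision_free)
qed

lemma K23_subdivision_from_path: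
  assumes W: "distinct W" "set W \<subseteq> V" "path_edges W \<subseteq> E"
    and uv: "u \<in> V" "v \<in> V" "u \<noteq> v" "u \<notin> set W" "v \<notin> set W"
    and edges: "{u, W ! 0} \<in> E" "{u, W ! i} \<in> E" "{v, W ! 0} \<in> E" "{v, W ! k} \<in> E"
    and ik: "2 \<le> i" "i \<le> k" "k < length W"
  shows "\<not> K23_subdivision_free V E"
proof -
  let ?a = "W ! 0" and ?b = "W ! i"
  define Q where "Q = map (nth W) [i..<Suc k]"
  define P1 where "P1 = [?a, u, ?b]"
  define P2 where "P2 = map (nth W) [0..<Suc i]"
  define P3 where "P3 = ?a # v # rev Q"
  have inj: "inj_on (nth W) {..<length W}" using inj_on_nth[OF W(1)] by blast
  have "W \<noteq> []" using ik by auto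
  then have ab: "?a \<noteq> ?b" using ik W(1) by (simp add: nth_eq_iff_index_eq)
  have ends: "?a \<in> set W" "?b \<in> set W" using ik \<open>W \<noteq> []\<close> by auto
  have set_P2: "set P2 = nth W ` {0..i}"
    unfolding P2_def by (simp del: upt_Suc add: atLeastLessThanSuc_atLeastAtMost)
  have set_Q: "set Q = nth W ` {i..k}"
    unfolding Q_def by (simp del: upt_Suc add: atLeastLessThanSuc_atLeastAtMost)
  have Q: "distinct Q" "hd Q = ?b" "last Q = W ! k" "set Q \<subseteq> V" "path_edges Q \<subseteq> E"
    using ik inj W path_edges_segment[of k W i] set_Q unfolding Q_def
    by (auto simp del: upt_Suc simp: distinct_map hd_map last_map intro: inj_on_subset)
  have p1: "long_path V E ?a ?b P1"
    using uv edges ab ends W(2) unfolding long_path_def P1_def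
    by (auto simp: insert_commute)
  have p2: "long_path V E ?a ?b P2"
    using ik inj W path_edges_segment[of i W 0] set_P2 unfolding long_path_def P2_def
    by (auto simp del: upt_Suc simp: distinct_map hd_map last_map intro: inj_on_subset)
  have p3: "long_path V E ?a ?b P3"
  proof -
    have "Q \<noteq> []" using ik unfolding Q_def by simp
    then obtain r rs where rev_Q: "rev Q = r # rs" by (cases "rev Q") auto
    then have "r = W ! k" using Q(3) hd_rev[of Q] by simp
    then have "path_edges P3 = insert {?a, v} (insert {v, W ! k} (path_edges Q))"
      unfolding P3_def using rev_Q path_edges_rev[of Q] by simp
    moreover have "{?a, v} \<in> E" using edges(3) by (simp add: insert_commute)
    moreover have "last P3 = ?b"
    proof -
      have "last P3 = last (rev Q)" unfolding P3_def using rev_Q by simp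
      also have "\<dots> = ?b" using Q(2) \<open>Q \<noteq> []\<close> by (simp add: last_rev)
      finally show ?thesis .
    qed
    moreover have "distinct P3"
    proof -
      have "?a \<notin> set Q" using ik inj set_Q by (auto dest: inj_onD)
      moreover have "v \<notin> set Q" using uv(5) set_Q ik by auto
      moreover have "?a \<noteq> v" using uv(5) ends(1) by blast
      ultimately show ?thesis unfolding P3_def using Q(1) by simp
    qed
    moreover have "set P3 \<subseteq> V" unfolding P3_def using Q(4) uv(2) ends(1) W(2) by auto
    moreover have "3 \<le> length P3" unfolding P3_def using \<open>Q \<noteq> []\<close> by (cases Q) simp_all
    moreover have "hd P3 = ?a" unfolding P3_def by simp
    ultimately show ?thesis using Q(5) edges(4) unfolding long_path_def by simp
  qed
  have in_W: "nth W ` {0..k} \<subseteq> set W" using ik by auto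
  have "?a \<in> set P2" "?b \<in> set P2" "?b \<in> set Q" using set_P2 set_Q ik by auto
  moreover have "set P2 \<subseteq> set W" "set Q \<subseteq> set W" using set_P2 set_Q in_W ik by auto
  ultimately have I12: "set P1 \<inter> set P2 = {?a, ?b}" and I13: "set P1 \<inter> set P3 = {?a, ?b}"
    using uv unfolding P1_def P3_def by auto
  have I23: "set P2 \<inter> set P3 = {?a, ?b}"
  proof -
    have "{0..i} \<subseteq> {..<length W}" "{i..k} \<subseteq> {..<length W}" using ik by auto
    then have "nth W ` {0..i} \<inter> nth W ` {i..k} = nth W ` ({0..i} \<inter> {i..k})"
      by (rule inj_on_image_Int[OF inj, symmetric])
    also have "\<dots> = {?b}" using ik by auto
    finally show ?thesis using set_P2 set_Q uv ik unfolding P3_def by auto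
  qed
  show ?thesis unfolding K23_subdivision_free_def using p1 p2 p3 I12 I13 I23 by blast
qed

definition doubly_attached ::
    "'a set \<Rightarrow> 'a set set \<Rightarrow> 'a set \<Rightarrow> 'a set \<Rightarrow> ('a \<Rightarrow> 'a) \<Rightarrow> ('a \<Rightarrow> 'a) \<Rightarrow> bool" where
  "doubly_attached V E X Y g1 g2 \<longleftrightarrow> X \<subseteq> V \<and> Y \<subseteq> V \<and> X \<inter> Y = {} \<and>
     (\<forall>y\<in>Y. g1 y \<in> X \<and> g2 y \<in> X \<and> g1 y \<noteq> g2 y \<and> {y, g1 y} \<in> E \<and> {y, g2 y} \<in> E)"

definition alternating_path :: "'a set \<Rightarrow> 'a set \<Rightarrow> ('a \<Rightarrow> 'a) \<Rightarrow> ('a \<Rightarrow> 'a) \<Rightarrow> 'a list \<Rightarrow> bool" where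
  "alternating_path X Y g1 g2 W \<longleftrightarrow> odd (length W) \<and> distinct W \<and>
     (\<forall>m < length W. if even m then W ! m \<in> X
        else W ! m \<in> Y \<and> {g1 (W ! m), g2 (W ! m)} = {W ! (m - 1), W ! Suc m})"

lemma alternating_path_even:
  "alternating_path X Y g1 g2 W \<Longrightarrow> even m \<Longrightarrow> m < length W \<Longrightarrow> W ! m \<in> X"
  unfolding alternating_path_def by auto

lemma alternating_path_odd:
  assumes "alternating_path X Y g1 g2 W" "odd m" "m < length W"
  shows "W ! m \<in> Y" "{g1 (W ! m), g2 (W ! m)} = {W ! (m - 1), W ! Suc m}" "Suc m < length W"
proof -
  show "W ! m \<in> Y" "{g1 (W ! m), g2 (W ! m)} = {W ! (m - 1), W ! Suc m}"
    using assms unfolding alternating_path_def by auto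
  have "odd (length W)" using assms(1) unfolding alternating_path_def by blast
  then show "Suc m < length W" using assms(2,3) by (metis Suc_lessI even_Suc)
qed

lemma alternating_path_set:
  assumes "alternating_path X Y g1 g2 W"
  shows "set W \<subseteq> X \<union> Y"
proof
  fix w assume "w \<in> set W"
  then obtain m where "m < length W" "w = W ! m" by (auto simp: in_set_conv_nth)
  then show "w \<in> X \<union> Y"
    using alternating_path_even[OF assms] alternating_path_odd(1)[OF assms] by blast
qed

lemma alternating_path_Cons2:
  assumes W: "alternating_path X Y g1 g2 W"
    and new: "z \<in> X" "y \<in> Y" "{g1 y, g2 y} = {z, W ! 0}" "z \<notin> set W" "y \<notin> set W" "z \<noteq> y"
  shows "alternating_path X Y g1 g2 (z # y # W)"
  unfolding alternating_path_def
proof (intro conjI allI impI)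
  show "odd (length (z # y # W))" "distinct (z # y # W)"
    using W new unfolding alternating_path_def by auto
  fix m assume m: "m < length (z # y # W)"
  show "if even m then (z # y # W) ! m \<in> X
    else (z # y # W) ! m \<in> Y \<and>
      {g1 ((z # y # W) ! m), g2 ((z # y # W) ! m)} = {(z # y # W) ! (m - 1), (z # y # W) ! Suc m}"
  proof (cases m)
    case (Suc m')
    show ?thesis
    proof (cases m')
      case (Suc n)
      then have "if even n then W ! n \<in> X
        else W ! n \<in> Y \<and> {g1 (W ! n), g2 (W ! n)} = {W ! (n - 1), W ! Suc n}"
        using W m \<open>m = Suc m'\<close> unfolding alternating_path_def by auto
      then show ?thesis using \<open>m = Suc m'\<close> Suc by (auto simp: nth_Cons')
    qed (use new \<open>m = Suc m'\<close> in auto)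
  qed (use new in auto)
qed

lemma alternating_path_edges:
  assumes "doubly_attached V E X Y g1 g2" "alternating_path X Y g1 g2 W"
  shows "path_edges W \<subseteq> E"
proof
  fix e assume "e \<in> path_edges W"
  then obtain i where i: "e = {W ! i, W ! Suc i}" "Suc i < length W"
    unfolding path_edges_conv_nth by blast
  have attached: "{y, x} \<in> E" if "y \<in> Y" "x \<in> {g1 y, g2 y}" for x y
    using assms(1) that unfolding doubly_attached_def by auto
  show "e \<in> E"
  proof (cases "even i")
    case True
    then have "W ! i \<in> {g1 (W ! Suc i), g2 (W ! Suc i)}" "W ! Suc i \<in> Y"
      using alternating_path_odd[OF assms(2), of "Suc i"] i(2) by auto
    then show ?thesis using attached i(1) by (auto simp: insert_commute)
  next
    case False
    then have "W ! Suc i \<in> {g1 (W ! i), g2 (W ! i)}" "W ! i \<in> Y"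
      using alternating_path_odd[OF assms(2), of i] i(2) by auto
    then show ?thesis using attached i(1) by auto
  qed
qed

lemma longest_alternating_path_exists:
  assumes "finite X" "finite Y" "x \<in> X"
  shows "\<exists>W. alternating_path X Y g1 g2 W \<and>
    (\<forall>W'. alternating_path X Y g1 g2 W' \<longrightarrow> length W' \<le> length W)"
proof -
  have "length W < card (X \<union> Y) + 1" if "alternating_path X Y g1 g2 W" for W
  proof -
    have "set W \<subseteq> X \<union> Y" by (rule alternating_path_set[OF that])
    moreover have "distinct W" using that unfolding alternating_path_def by blast
    ultimately show ?thesis
      using card_mono[of "X \<union> Y" "set W"] assms(1,2) by (simp add: distinct_card)
  qed
  moreover have "alternating_path X Y g1 g2 [x]"
    using assms(3) unfolding alternating_path_def by simp
  ultimately show ?thesis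
    using ex_has_greatest_nat[of "alternating_path X Y g1 g2" "[x]" length] by blast
qed

text \<open>The other attachment of \<open>y\<close> lies on \<open>W\<close>, for otherwise it and \<open>y\<close> would extend
  \<open>W\<close> to a longer alternating path.\<close>
lemma longest_alternating_path_attachment:
  assumes W: "alternating_path X Y g1 g2 W"
    and longest: "\<And>W'. alternating_path X Y g1 g2 W' \<Longrightarrow> length W' \<le> length W"
    and XY: "X \<inter> Y = {}"
    and y: "y \<in> Y" "g1 y \<in> X" "g2 y \<in> X" "g1 y \<noteq> g2 y" "W ! 0 \<in> {g1 y, g2 y}" "y \<noteq> W ! 1"
  shows "y \<notin> set W" "\<exists>i. 2 \<le> i \<and> i < length W \<and> {g1 y, g2 y} = {W ! 0, W ! i}"
proof -
  have distinct: "distinct W" using W unfolding alternating_path_def by blast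
  show y_notin: "y \<notin> set W"
  proof
    assume "y \<in> set W"
    then obtain m where m: "m < length W" "W ! m = y" by (auto simp: in_set_conv_nth)
    have "odd m" using alternating_path_even[OF W _ m(1)] m(2) y(1) XY by blast
    then have "W ! 0 \<in> {W ! (m - 1), W ! Suc m}" "Suc m < length W"
      using alternating_path_odd[OF W _ m(1)] y(5) m(2) by auto
    moreover have "W \<noteq> []" "0 < m" using m(1) \<open>odd m\<close> by (auto simp: odd_pos)
    ultimately have "m = 1" using \<open>odd m\<close> m(1) distinct by (auto simp: nth_eq_iff_index_eq)
    then show False using m(2) y(6) by simp
  qed
  obtain z where z: "{g1 y, g2 y} = {W ! 0, z}" "z \<in> X" "z \<noteq> W ! 0"
  proof (cases "g1 y = W ! 0")
    case True
    then show ?thesis using that[of "g2 y"] y(3,4) by auto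
  next
    case False
    then show ?thesis using that[of "g1 y"] y(2,5) by (auto simp: insert_commute)
  qed
  have "z \<in> set W"
  proof (rule ccontr)
    assume "z \<notin> set W"
    then have "alternating_path X Y g1 g2 (z # y # W)"
      using alternating_path_Cons2[OF W z(2) y(1) _ _ y_notin] z(1) y(1) z(2) XY
      by (auto simp: insert_commute)
    then show False using longest by fastforce
  qed
  then obtain i where i: "i < length W" "W ! i = z" by (auto simp: in_set_conv_nth)
  have "i \<noteq> 0"
  proof
    assume "i = 0"
    then show False using i(2) z(3) by simp
  qed
  moreover have "i \<noteq> 1" using alternating_path_odd(1)[OF W, of 1] i z(2) XY by auto
  ultimately show "\<exists>i. 2 \<le> i \<and> i < length W \<and> {g1 y, g2 y} = {W ! 0, W ! i}"
    using i z(1) by (intro exI[of _ i]) auto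
qed

lemma doubly_attached_low_degree:
  assumes free: "K23_subdivision_free V E" and att: "doubly_attached V E X Y g1 g2"
    and finite: "finite X" "finite Y" and "X \<noteq> {}"
  shows "\<exists>x\<in>X. card {y\<in>Y. x \<in> {g1 y, g2 y}} \<le> 2"
proof -
  obtain x where "x \<in> X" using \<open>X \<noteq> {}\<close> by blast
  obtain W where W: "alternating_path X Y g1 g2 W"
    and longest: "\<And>W'. alternating_path X Y g1 g2 W' \<Longrightarrow> length W' \<le> length W"
  proof -
    have "\<exists>W. alternating_path X Y g1 g2 W \<and>
        (\<forall>W'. alternating_path X Y g1 g2 W' \<longrightarrow> length W' \<le> length W)"
      by (rule longest_alternating_path_exists[OF finite \<open>x \<in> X\<close>])
    then show ?thesis using that by blast
  qed
  have "odd (length W)" using W unfolding alternating_path_def by blast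
  then have "0 < length W" by (rule odd_pos)
  then have start: "W ! 0 \<in> X" using alternating_path_even[OF W] by simp
  have att_y: "y \<in> V" "g1 y \<in> X" "g2 y \<in> X" "g1 y \<noteq> g2 y" "{y, g1 y} \<in> E" "{y, g2 y} \<in> E"
    if "y \<in> Y" for y
    using att that unfolding doubly_attached_def by auto
  have XY: "X \<inter> Y = {}" using att unfolding doubly_attached_def by blast
  define A where "A = {y\<in>Y. W ! 0 \<in> {g1 y, g2 y}}"
  have chord: "y \<notin> set W \<and> {y, W ! 0} \<in> E \<and> (\<exists>i. 2 \<le> i \<and> i < length W \<and> {y, W ! i} \<in> E)"
    if "y \<in> A - {W ! 1}" for y
  proof -
    have y: "y \<in> Y" "W ! 0 \<in> {g1 y, g2 y}" "y \<noteq> W ! 1" using that unfolding A_def by auto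
    note attachment = longest_alternating_path_attachment[OF W longest XY y(1) att_y(2-4)[OF y(1)] y(2,3)]
    then obtain i where i: "2 \<le> i" "i < length W" "{g1 y, g2 y} = {W ! 0, W ! i}" by blast
    have "{y, W ! 0} \<in> E" "{y, W ! i} \<in> E"
      using att_y(5,6)[OF y(1)] i(3) by (auto simp: doubleton_eq_iff)
    then show ?thesis using attachment(1) i(1,2) by blast
  qed
  have "card A \<le> 2"
  proof (rule ccontr)
    assume "\<not> card A \<le> 2"
    have not_pair: "\<not> A \<subseteq> {W ! 1, w}" for w
    proof
      assume "A \<subseteq> {W ! 1, w}"
      then have "card A \<le> card {W ! 1, w}" by (rule card_mono[rotated]) simp
      also have "\<dots> \<le> 2" by (cases "W ! 1 = w") simp_all
      finally show False using \<open>\<not> card A \<le> 2\<close> by simp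
    qed
    obtain u where u: "u \<in> A - {W ! 1}" using not_pair[of "W ! 1"] by auto
    obtain v where v: "v \<in> A - {W ! 1}" "u \<noteq> v" using not_pair[of u] by auto
    obtain i where i: "2 \<le> i" "i < length W" "{u, W ! i} \<in> E" using chord[OF u] by blast
    obtain k where k: "2 \<le> k" "k < length W" "{v, W ! k} \<in> E" using chord[OF v(1)] by blast
    have u_chord: "u \<notin> set W" "{u, W ! 0} \<in> E" and v_chord: "v \<notin> set W" "{v, W ! 0} \<in> E"
      using chord[OF u] chord[OF v(1)] by blast+
    have "u \<in> V" "v \<in> V" using u v(1) att_y(1) unfolding A_def by auto
    have path: "distinct W" "set W \<subseteq> V" "path_edges W \<subseteq> E"
      using W alternating_path_set[OF W] alternating_path_edges[OF att W] att
      unfolding alternating_path_def doubly_attached_def by auto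
    have "\<not> K23_subdivision_free V E"
    proof (cases "i \<le> k")
      case True
      show ?thesis
        using K23_subdivision_from_path[OF path \<open>u \<in> V\<close> \<open>v \<in> V\<close> v(2) u_chord(1) v_chord(1)
            u_chord(2) i(3) v_chord(2) k(3) i(1) True k(2)] .
    next
      case False
      show ?thesis
        using K23_subdivision_from_path[OF path \<open>v \<in> V\<close> \<open>u \<in> V\<close> v(2)[symmetric] v_chord(1)
            u_chord(1) v_chord(2) k(3) u_chord(2) i(3) k(1) _ i(2)] False by simp
    qed
    then show False using free by blast
  qed
  then show ?thesis using start unfolding A_def by (intro bexI[of _ "W ! 0"])
qed

lemma doubly_attached_card_bound:
  assumes free: "K23_subdivision_free V E"
  shows "doubly_attached V E X Y g1 g2 \<Longrightarrow> finite X \<Longrightarrow> finite Y \<Longrightarrow> X \<noteq> {} \<Longrightarrow>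
    card Y + 2 \<le> 2 * card X"
proof (induction "card X" arbitrary: X Y rule: less_induct)
  case less
  obtain x where x: "x \<in> X" "card {y\<in>Y. x \<in> {g1 y, g2 y}} \<le> 2"
    using doubly_attached_low_degree[OF free less.prems] by blast
  define A where "A = {y\<in>Y. x \<in> {g1 y, g2 y}}"
  show ?case
  proof (cases "X = {x}")
    case True
    have "Y = {}"
    proof (rule ccontr)
      assume "Y \<noteq> {}"
      then obtain y where "y \<in> Y" by blast
      then have "g1 y \<in> {x}" "g2 y \<in> {x}" "g1 y \<noteq> g2 y"
        using less.prems(1) True unfolding doubly_attached_def by blast+
      then show False by simp
    qed
    then show ?thesis using True by simp
  next
    case False
    have "doubly_attached V E (X - {x}) (Y - A) g1 g2"
      using less.prems(1) unfolding doubly_attached_def A_def by auto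
    moreover have "card (X - {x}) < card X" using card_Diff1_less[OF less.prems(2) x(1)] .
    ultimately have "card (Y - A) + 2 \<le> 2 * card (X - {x})"
      using less.hyps less.prems(2,3) False x(1) by blast
    moreover have "card Y \<le> card (Y - A) + card A"
      using card_Un_le[of "Y - A" A] card_mono[of "(Y - A) \<union> A" Y] less.prems(3) A_def by auto
    moreover have "card X = card (X - {x}) + 1"
      using x(1) less.prems(2) card.remove by fastforce
    ultimately show ?thesis using x(2) unfolding A_def by linarith
  qed
qed

lemma secure_total_dominating_two_neighbours:
  assumes "simple_graph V E" "secure_total_dominating V E S" "u \<in> V - S"
  shows "\<exists>v w. v \<in> S \<and> w \<in> S \<and> v \<noteq> w \<and> {u, v} \<in> E \<and> {u, w} \<in> E"
proof -
  obtain v where v: "v \<in> S" "adj E u v" "total_dominating V E ((S - {v}) \<union> {u})"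
    using assms(2,3) unfolding secure_total_dominating_def by blast
  then obtain w where w: "w \<in> (S - {v}) \<union> {u}" "adj E u w"
    using assms(3) unfolding total_dominating_def by blast
  have "w \<noteq> u"
  proof
    assume "w = u"
    then have "{u} \<in> E" using w(2) unfolding adj_def by simp
    then obtain a b where ab: "a \<noteq> b" "{u} = {a, b}"
      using assms(1) unfolding simple_graph_def by blast
    then have "a \<in> {u}" "b \<in> {u}" by blast+
    then show False using ab(1) by simp
  qed
  then show ?thesis using v w unfolding adj_def by blast
qed

lemma secure_total_dominating_doubly_attached:
  assumes "simple_graph V E" "secure_total_dominating V E S"
  obtains g1 g2 where "doubly_attached V E S (V - S) g1 g2"
proof -
  have "\<forall>u\<in>V - S. \<exists>vw. fst vw \<in> S \<and> snd vw \<in> S \<and> fst vw \<noteq> snd vw \<and>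
      {u, fst vw} \<in> E \<and> {u, snd vw} \<in> E"
    using secure_total_dominating_two_neighbours[OF assms] by fastforce
  then obtain f where f: "\<forall>u\<in>V - S. fst (f u) \<in> S \<and> snd (f u) \<in> S \<and> fst (f u) \<noteq> snd (f u) \<and>
      {u, fst (f u)} \<in> E \<and> {u, snd (f u)} \<in> E"
    by (rule bchoice[THEN exE])
  moreover have "S \<subseteq> V"
    using assms(2) unfolding secure_total_dominating_def total_dominating_def by blast
  ultimately have "doubly_attached V E S (V - S) (fst \<circ> f) (snd \<circ> f)"
    unfolding doubly_attached_def by auto
  then show ?thesis by (rule that)
qed

theorem theorem4p1:
  fixes V :: "'a set" and E :: "'a set set" and S :: "'a set"
  assumes "outerplanar V E"
    and "card V \<ge> 3"
    and "secure_total_dominating V E S"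
  shows "int (card S) \<ge> \<lceil>(real (card V) + 2) / 3\<rceil>"
proof -
  have simple: "simple_graph V E" using assms(1) unfolding outerplanar_def by blast
  then have "finite V" unfolding simple_graph_def by blast
  obtain g1 g2 where attached: "doubly_attached V E S (V - S) g1 g2"
    using secure_total_dominating_doubly_attached[OF simple assms(3)] .
  have "S \<subseteq> V" "\<forall>x\<in>V. \<exists>s\<in>S. adj E x s"
    using assms(3) unfolding secure_total_dominating_def total_dominating_def by blast+
  moreover have "V \<noteq> {}" using assms(2) by auto
  ultimately have "S \<noteq> {}" by blast
  have "finite S" using finite_subset[OF \<open>S \<subseteq> V\<close> \<open>finite V\<close>] .
  have "card (V - S) + 2 \<le> 2 * card S"
    using doubly_attached_card_bound[OF outerplanar_imp_K23_subdivision_free[OF assms(1)] attached]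
      \<open>finite V\<close> \<open>finite S\<close> \<open>S \<noteq> {}\<close> by blast
  moreover have "card (V - S) = card V - card S" "card S \<le> card V"
    using card_Diff_subset[OF \<open>finite S\<close> \<open>S \<subseteq> V\<close>] card_mono[OF \<open>finite V\<close> \<open>S \<subseteq> V\<close>] by simp_all
  ultimately have "real (card V) + 2 \<le> 3 * real (card S)" by linarith
  then show ?thesis by (simp add: ceiling_le_iff)
qed

end
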